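(* Let $A=\{a_1,\dots,a_k\}$ with $k\ge2$, and let $Z\subseteq A^+$ be a finite code of standard form. If $\gcd(|Z_{a_1}|,|Z_{a_2}|,\dots,|Z_{a_k}|)=1$, then $Z$ is not an alt-induced code.
   Context: $A^+$ is the set of non-empty words over $A$; $XY=\{xy:x\in X,y\in Y\}$; $|S|$ denotes cardinality. For $a\in A$, $Z_a$ is the set of words of $Z$ beginning with the letter $a$ (possibly empty, with $|Z_a|=0$). A code is a subset of $A^+$ in which every word has at most one factorization into its elements. A finite code $Z$ over $A$ (with $|A|\ge2$) is of standard form if every word of $Z$ has length at least $2$, it is not the case that all words of $Z$ begin with the same letter, and it is not the case that all words of $Z$ end with the same letter. For non-empty $X,Y\subseteq A^+$, $(X,Y)$ is an alternative code if $XY$ is a code and each element of $XY$ has exactly one factorization $xy$ with $x\in X,y\in Y$ (equivalently, no word admits two different similar alternative factorizations on $(X,Y)$). $Z$ is an alt-induced code if $Z=XY$ for some alternative code $(X,Y)$. *)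

theory Defs
  imports Main
begin

definition nonempty_words :: "'a set \<Rightarrow> 'a list set" where
  "nonempty_words A = {w. w \<in> lists A \<and> w \<noteq> []}"

definition set_concat :: "'a list set \<Rightarrow> 'a list set \<Rightarrow> 'a list set" where
  "set_concat X Y = {x @ y | x y. x \<in> X \<and> y \<in> Y}"

definition is_code :: "'a set \<Rightarrow> 'a list set \<Rightarrow> bool" where
  "is_code A Z \<longleftrightarrow> Z \<subseteq> nonempty_words A \<and>
     (\<forall>xs ys. set xs \<subseteq> Z \<longrightarrow> set ys \<subseteq> Z \<longrightarrow> concat xs = concat ys \<longrightarrow> xs = ys)"

definition words_starting :: "'a list set \<Rightarrow> 'a \<Rightarrow> 'a list set" where
  "words_starting Z a = {z \<in> Z. z \<noteq> [] \<and> hd z = a}"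

definition standard_form :: "'a set \<Rightarrow> 'a list set \<Rightarrow> bool" where
  "standard_form A Z \<longleftrightarrow> finite Z \<and> is_code A Z \<and>
     (\<forall>z\<in>Z. 2 \<le> length z) \<and>
     \<not> (\<exists>a. \<forall>z\<in>Z. hd z = a) \<and>
     \<not> (\<exists>a. \<forall>z\<in>Z. last z = a)"

definition alternative_code :: "'a set \<Rightarrow> 'a list set \<Rightarrow> 'a list set \<Rightarrow> bool" where
  "alternative_code A X Y \<longleftrightarrow>
     X \<noteq> {} \<and> Y \<noteq> {} \<and> X \<subseteq> nonempty_words A \<and> Y \<subseteq> nonempty_words A \<and>
     is_code A (set_concat X Y) \<and>
     (\<forall>w \<in> set_concat X Y. \<exists>!p. fst p \<in> X \<and> snd p \<in> Y \<and> w = fst p @ snd p)"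

definition alt_induced :: "'a set \<Rightarrow> 'a list set \<Rightarrow> bool" where
  "alt_induced A Z \<longleftrightarrow> (\<exists>X Y. alternative_code A X Y \<and> Z = set_concat X Y)"

end

theory Submission
  imports Defs
begin

text \<open>If \<open>Z = XY\<close> with unique factorizations, then every \<open>Z\<^sub>a\<close> is in bijection with
  \<open>X\<^sub>a \<times> Y\<close>, so \<open>|Y|\<close> divides all \<open>|Z\<^sub>a|\<close> and hence their gcd, which forces \<open>Y = {y}\<close>.
  But then every word of \<open>Z\<close> ends with the last letter of \<open>y\<close>, contradicting
  standard form.\<close>

lemma set_concat_eq_image: "set_concat X Y = (\<lambda>(x, y). x @ y) ` (X \<times> Y)"
  unfolding set_concat_def by auto

lemma alternative_code_inj_on_append:
  assumes "alternative_code A X Y"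
  shows "inj_on (\<lambda>(x, y). x @ y) (X \<times> Y)"
proof (rule inj_onI, clarsimp)
  fix x1 y1 x2 y2
  assume xy: "x1 \<in> X" "y1 \<in> Y" "x2 \<in> X" "y2 \<in> Y" and eq: "x1 @ y1 = x2 @ y2"
  have "x1 @ y1 \<in> set_concat X Y"
    using xy unfolding set_concat_def by blast
  then have "\<exists>!p. fst p \<in> X \<and> snd p \<in> Y \<and> x1 @ y1 = fst p @ snd p"
    using assms unfolding alternative_code_def by blast
  then have "(x1, y1) = (x2, y2)"
    using xy eq by (metis fst_conv snd_conv)
  then show "x1 = x2 \<and> y1 = y2" by simp
qed

lemma card_set_concat:
  assumes "inj_on (\<lambda>(x, y). x @ y) (X \<times> Y)"
  shows "card (set_concat X Y) = card X * card Y"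
  using assms by (simp add: set_concat_eq_image card_image card_cartesian_product)

lemma words_starting_set_concat:
  assumes "[] \<notin> X"
  shows "words_starting (set_concat X Y) a = set_concat (words_starting X a) Y"
proof -
  have "x @ y \<noteq> [] \<and> hd (x @ y) = a \<longleftrightarrow> x \<noteq> [] \<and> hd x = a" if "x \<in> X" for x y
    using assms that by (cases x) auto
  then show ?thesis
    unfolding words_starting_def set_concat_def by blast
qed

lemma card_words_starting_alternative_code:
  assumes "alternative_code A X Y"
  shows "card (words_starting (set_concat X Y) a) = card (words_starting X a) * card Y"
proof -
  have "[] \<notin> X"
    using assms unfolding alternative_code_def nonempty_words_def by auto
  moreover have "inj_on (\<lambda>(x, y). x @ y) (words_starting X a \<times> Y)"
    by (rule inj_on_subset[OF alternative_code_inj_on_append[OF assms]])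
      (auto simp: words_starting_def)
  ultimately show ?thesis
    by (simp add: words_starting_set_concat card_set_concat)
qed

lemma last_set_concat_singleton:
  assumes "z \<in> set_concat X {y}" and "y \<noteq> []"
  shows "last z = last y"
  using assms unfolding set_concat_def by auto

theorem theoremT:
  fixes A :: "'a set" and Z :: "'a list set"
  assumes "finite A" and "card A \<ge> 2"
    and "Z \<subseteq> nonempty_words A"
    and "finite Z" and "is_code A Z" and "standard_form A Z"
    and "Gcd ((\<lambda>a. card (words_starting Z a)) ` A) = 1"
  shows "\<not> alt_induced A Z"
proof
  assume "alt_induced A Z"
  then obtain X Y where alt: "alternative_code A X Y" and Z: "Z = set_concat X Y"
    unfolding alt_induced_def by blast
  have "card Y dvd Gcd ((\<lambda>a. card (words_starting Z a)) ` A)"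
    by (rule Gcd_greatest) (auto simp: Z card_words_starting_alternative_code[OF alt])
  then obtain y where Y: "Y = {y}"
    using assms(7) card_1_singletonE by auto
  moreover have "y \<noteq> []"
    using alt Y unfolding alternative_code_def nonempty_words_def by auto
  ultimately have "\<forall>z\<in>Z. last z = last y"
    using Z last_set_concat_singleton by blast
  then show False
    using assms(6) unfolding standard_form_def by blast
qed

end
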